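(* Let $n\ge3$ and $1\le l\le n$, and put $\alpha^{(n)}_l=2\cos\frac{l\pi}{n+1}$. If $l$ is odd, then \[ \Phi_n(\alpha^{(n)}_l)=16\cos^2\frac{l\pi}{2(n+1)}>0. \] If $l$ is even, then $\Phi_n(\alpha^{(n)}_l)=0$ and \[ \Phi_n'(\alpha^{(n)}_l)=K^{(n)}_l\Big(\cos\frac{l\pi}{n+1}+\frac{n}{n+2}\Big)\neq0,\qquad K^{(n)}_l=\frac{2(n+1)(n+2)\big(1-\cos\frac{l\pi}{n+1}\big)}{\sin^2\frac{l\pi}{n+1}}>0. \]
   Context: $U_n$ is the Chebyshev polynomial of the second kind, $U_n(\cos\theta)=\sin((n+1)\theta)/\sin\theta$, $\tilde U_n(x)=U_n(x/2)$, and $\Phi_n(x)=((n+1)x^2-6x-4n)\tilde U_n(x)+2(x+2)\tilde U_{n-1}(x)+2(x+2)$. *)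

theory Defs
  imports "HOL-Analysis.Analysis"
begin

text \<open>Chebyshev polynomials of the second kind, via the standard recurrence:
  U_0 = 1, U_1 = 2x, U_(n+2) = 2x U_(n+1) - U_n.  These satisfy
  U_n(cos t) = sin((n+1)t)/sin t.\<close>
fun chebU :: "nat \<Rightarrow> real \<Rightarrow> real" where
  "chebU 0 x = 1"
| "chebU (Suc 0) x = 2 * x"
| "chebU (Suc (Suc n)) x = 2 * x * chebU (Suc n) x - chebU n x"

definition chebU_t :: "nat \<Rightarrow> real \<Rightarrow> real" where
  "chebU_t n x = chebU n (x / 2)"

definition Phi :: "nat \<Rightarrow> real \<Rightarrow> real" where
  "Phi n x = ((real n + 1) * x^2 - 6 * x - 4 * real n) * chebU_t n x
             + 2 * (x + 2) * chebU_t (n - 1) x + 2 * (x + 2)"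

end

(*
  With theta = l pi/(n+1) and alpha = 2 cos theta, the identity U_n(cos t) sin t = sin((n+1)t)
  gives U_n(cos theta) = 0 and U_(n-1)(cos theta) = -(-1)^l, hence
  Phi_n(alpha) = 4 (1 + cos theta)(1 - (-1)^l).  For even l the derivative follows from
  (1 - x^2) U_n'(x) = (n+1) U_(n-1)(x) - n x U_n(x).  Its factor cos theta + n/(n+2) cannot
  vanish: otherwise 2 cos theta = a/b is rational, in lowest terms, and then the Lucas number
  V_M(a, b^2) = b^M 2 cos(M theta) is congruent to a^M modulo b.  For M = n+1 it equals
  2(-1)^l b^M, so b divides a^M and b = 1.  But -2n/(n+2) lies strictly between -2 and -1
  when n >= 3.
*)
theory Submission
  imports Defs
begin

fun lucasV :: "int \<Rightarrow> int \<Rightarrow> nat \<Rightarrow> int" where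
  "lucasV P Q 0 = 2"
| "lucasV P Q (Suc 0) = P"
| "lucasV P Q (Suc (Suc m)) = P * lucasV P Q (Suc m) - Q * lucasV P Q m"

lemma lucasV_cos:
  assumes "of_int P = 2 * cos t * r" and "of_int Q = r ^ 2"
  shows "of_int (lucasV P Q m) = r ^ m * (2 * cos (real m * t))"
proof (induction m rule: induct_nat_012)
  case (ge2 m)
  have recurrence:
    "cos (real (Suc (Suc m)) * t) = 2 * cos t * cos (real (Suc m) * t) - cos (real m * t)"
    using cos_add[of "real (Suc m) * t" t] cos_diff[of "real (Suc m) * t" t]
    by (simp add: algebra_simps)
  have "of_int (lucasV P Q (Suc (Suc m)))
      = r ^ Suc (Suc m) * (2 * cos t * (2 * cos (real (Suc m) * t)) - 2 * cos (real m * t))"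
    using ge2 assms by (simp add: algebra_simps power2_eq_square)
  also have "\<dots> = r ^ Suc (Suc m) * (2 * cos (real (Suc (Suc m)) * t))"
    using recurrence by simp
  finally show ?case .
qed (use assms in simp_all)

lemma lucasV_cong_power: "m \<ge> 1 \<Longrightarrow> Q dvd lucasV P Q m - P ^ m"
proof (induction P Q m rule: lucasV.induct)
  case (3 P Q m)
  show ?case
  proof (cases m)
    case 0
    then show ?thesis by (simp add: power2_eq_square)
  next
    case (Suc k)
    then have "Q dvd P * (lucasV P Q (Suc m) - P ^ Suc m) - Q * lucasV P Q m"
      using 3 by simp
    then show ?thesis by (simp add: algebra_simps)
  qed
qed simp_all

lemma two_cos_in_Ints_if_rational:
  assumes rat: "2 * cos t \<in> \<rat>" and int: "2 * cos (real M * t) \<in> \<int>" and "M \<ge> 1"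
  shows "2 * cos t \<in> \<int>"
proof -
  obtain a b where "b > 0" "coprime a b" and ab: "2 * cos t = of_int a / of_int b"
    using rat by (rule Rats_cases')
  obtain z where z: "2 * cos (real M * t) = of_int z" using int by (rule Ints_cases)
  have "of_int (lucasV a (b ^ 2) M) = real_of_int (b ^ M * z)"
    using lucasV_cos[of a t "of_int b" "b ^ 2" M] ab \<open>b > 0\<close> z by simp
  then have "lucasV a (b ^ 2) M = b ^ M * z" by linarith
  then have "b dvd lucasV a (b ^ 2) M" using \<open>M \<ge> 1\<close> by (simp add: dvd_power)
  moreover have "b dvd lucasV a (b ^ 2) M - a ^ M"
    using lucasV_cong_power[OF \<open>M \<ge> 1\<close>] by (rule dvd_trans[rotated]) simp
  ultimately have "b dvd lucasV a (b ^ 2) M - (lucasV a (b ^ 2) M - a ^ M)"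
    by (rule dvd_diff)
  then have "b dvd a ^ M" by simp
  moreover have "coprime b (a ^ M)" using \<open>coprime a b\<close> by (simp add: coprime_commute)
  ultimately have "is_unit b" using coprime_absorb_left by blast
  then have "b = 1" using \<open>b > 0\<close> by simp
  then show ?thesis using ab by simp
qed

fun chebU_deriv :: "nat \<Rightarrow> real \<Rightarrow> real" where
  "chebU_deriv 0 x = 0"
| "chebU_deriv (Suc 0) x = 2"
| "chebU_deriv (Suc (Suc n)) x = 2 * chebU (Suc n) x + 2 * x * chebU_deriv (Suc n) x - chebU_deriv n x"

lemma has_real_derivative_chebU: "(chebU n has_real_derivative chebU_deriv n x) (at x)"
proof (induction n rule: induct_nat_012)
  case 0
  then show ?case by (simp add: fun_eq_iff)
next
  case 1
  have "((\<lambda>y. 2 * y) has_real_derivative 2) (at x)" by (auto intro!: derivative_eq_intros)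
  then show ?case by (simp add: fun_eq_iff)
next
  case (ge2 n)
  have "((\<lambda>y. 2 * y * chebU (Suc n) y - chebU n y) has_real_derivative
          2 * chebU (Suc n) x + 2 * x * chebU_deriv (Suc n) x - chebU_deriv n x) (at x)"
    by (rule derivative_eq_intros ge2 refl | simp add: algebra_simps)+
  then show ?case by (simp add: fun_eq_iff)
qed

lemma has_real_derivative_chebU_t: "(chebU_t n has_real_derivative chebU_deriv n (x / 2) / 2) (at x)"
proof -
  have "((\<lambda>x. chebU n (x / 2)) has_real_derivative chebU_deriv n (x / 2) * (1 / 2)) (at x)"
    by (rule DERIV_chain2[OF has_real_derivative_chebU]) (auto intro!: derivative_eq_intros)
  then show ?thesis by (simp add: chebU_t_def[abs_def])
qed

lemma chebU_deriv_Suc: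
  "(1 - x^2) * chebU_deriv (Suc n) x = (real n + 2) * chebU n x - (real n + 1) * x * chebU (Suc n) x"
proof (induction n rule: induct_nat_012)
  case (ge2 n)
  have "(1 - x^2) * chebU_deriv (Suc (Suc (Suc n))) x
      = 2 * (1 - x^2) * chebU (Suc (Suc n)) x + 2 * x * ((1 - x^2) * chebU_deriv (Suc (Suc n)) x)
        - (1 - x^2) * chebU_deriv (Suc n) x"
    by (simp add: algebra_simps)
  then show ?case unfolding ge2 by (simp add: algebra_simps power2_eq_square)
qed (simp_all add: algebra_simps power2_eq_square)

lemma chebU_cos_times_sin: "chebU n (cos t) * sin t = sin ((real n + 1) * t)"
proof (induction n rule: induct_nat_012)
  case 1
  then show ?case by (simp add: sin_double)
next
  case (ge2 n)
  have "sin ((real n + 3) * t) = sin ((real n + 2) * t + t)"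
    and "sin ((real n + 1) * t) = sin ((real n + 2) * t - t)"
    by (simp_all add: algebra_simps)
  then have "sin ((real n + 3) * t) = 2 * cos t * sin ((real n + 2) * t) - sin ((real n + 1) * t)"
    by (simp add: sin_add sin_diff)
  then show ?case using ge2 by (simp add: algebra_simps)
qed simp

lemma chebU_cos_at_root:
  assumes "sin t \<noteq> 0" and "(real n + 1) * t = real l * pi"
  shows "chebU n (cos t) = 0"
  using chebU_cos_times_sin[of n t] assms by simp

lemma chebU_pred_cos_at_root:
  assumes "sin t \<noteq> 0" and "(real n + 1) * t = real l * pi" and "n \<ge> 1"
  shows "chebU (n - 1) (cos t) = - ((-1) ^ l)"
proof -
  have "(real (n - 1) + 1) * t = real l * pi - t" using assms(2,3) by (simp add: algebra_simps)
  then have "chebU (n - 1) (cos t) * sin t = sin (real l * pi - t)"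
    by (simp add: chebU_cos_times_sin)
  also have "\<dots> = - ((-1) ^ l) * sin t" by (simp add: sin_diff)
  finally show ?thesis using assms(1) by (metis mult_cancel_right)
qed

lemma deriv_Phi:
  "deriv (Phi n) x = (2 * (real n + 1) * x - 6) * chebU_t n x
     + ((real n + 1) * x^2 - 6 * x - 4 * real n) * chebU_deriv n (x / 2) / 2
     + 2 * chebU_t (n - 1) x + (x + 2) * chebU_deriv (n - 1) (x / 2) + 2"
  unfolding Phi_def[abs_def]
  by (rule DERIV_imp_deriv)
    (auto intro!: derivative_eq_intros has_real_derivative_chebU_t simp: field_simps)

lemma Phi_at_root:
  assumes "sin t \<noteq> 0" and "(real n + 1) * t = real l * pi" and "n \<ge> 1"
  shows "Phi n (2 * cos t) = 4 * (cos t + 1) * (1 - (-1) ^ l)"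
  using chebU_cos_at_root[OF assms(1,2)] chebU_pred_cos_at_root[OF assms]
  by (simp add: Phi_def chebU_t_def algebra_simps)

lemma deriv_Phi_at_even_root:
  assumes "sin t \<noteq> 0" and root: "(real n + 1) * t = real l * pi" and "n \<ge> 2" and "even l"
  shows "deriv (Phi n) (2 * cos t)
           = 2 * (real n + 1) * (real n + 2) * (1 - cos t) / (sin t)^2 * (cos t + real n / (real n + 2))"
proof -
  define c where "c = cos t"
  obtain k where n: "n = Suc (Suc k)" using \<open>n \<ge> 2\<close> by (metis add_2_eq_Suc le_Suc_ex)
  have s2: "1 - c^2 = (sin t)^2" by (simp add: c_def sin_squared_eq)
  have U_n: "chebU n c = 0" using chebU_cos_at_root[OF assms(1) root] by (simp add: c_def)
  have U_pred: "chebU (Suc k) c = -1"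
    using chebU_pred_cos_at_root[OF assms(1) root] \<open>even l\<close> by (simp add: c_def n)
  have U_pred2: "chebU k c = - 2 * c" using U_n U_pred by (simp add: n)
  have D_n: "chebU_deriv n c = - (real n + 1) / (sin t)^2"
    using chebU_deriv_Suc[of c "Suc k"] U_n U_pred assms(1)
    by (simp add: s2 n field_simps del: chebU.simps chebU_deriv.simps)
  have D_pred: "chebU_deriv (n - 1) c = - (real n + 1) * c / (sin t)^2"
    using chebU_deriv_Suc[of c k] U_pred U_pred2 assms(1)
    by (simp add: s2 n field_simps del: chebU.simps chebU_deriv.simps)
  have "deriv (Phi n) (2 * c)
      = ((real n + 1) * (2 * c)^2 - 12 * c - 4 * real n) * chebU_deriv n c / 2
        + (2 * c + 2) * chebU_deriv (n - 1) c"
    using U_n U_pred by (simp add: deriv_Phi chebU_t_def n)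
  also have "\<dots> = - (real n + 1) / (sin t)^2 * (2 * (real n + 2) * c^2 - 4 * c - 2 * real n)"
    unfolding D_n D_pred using assms(1) by (simp add: field_simps power2_eq_square)
  also have "\<dots> = 2 * (real n + 1) * (real n + 2) * (1 - c) / (sin t)^2 * (c + real n / (real n + 2))"
    using assms(1) by (simp add: field_simps power2_eq_square add_nonneg_eq_0_iff)
  finally show ?thesis by (simp add: c_def)
qed

lemma cos_root_ne_neg_ratio:
  assumes root: "(real n + 1) * t = real l * pi" and "n \<ge> 3"
  shows "cos t + real n / (real n + 2) \<noteq> 0"
proof
  assume "cos t + real n / (real n + 2) = 0"
  then have c: "2 * cos t = - 2 * real n / (real n + 2)" by (simp add: field_simps)
  have "2 * cos t \<in> \<rat>" unfolding c by simp
  moreover have "real (n + 1) * t = real l * pi" using root by (simp add: algebra_simps)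
  then have "2 * cos (real (n + 1) * t) \<in> \<int>" by simp
  ultimately have "2 * cos t \<in> \<int>" by (rule two_cos_in_Ints_if_rational) simp
  then obtain z where z: "2 * cos t = of_int z" by (rule Ints_cases)
  have "- 2 < 2 * cos t" and "2 * cos t < - 1"
    using \<open>n \<ge> 3\<close> unfolding c by (simp_all add: field_simps)
  then have "- 2 < z" and "z < - 1" unfolding z by simp_all
  then show False by simp
qed

theorem lemma4p11:
  fixes n l :: nat
  assumes "n \<ge> 3" and "1 \<le> l" and "l \<le> n"
  defines "\<alpha> \<equiv> 2 * cos (real l * pi / (real n + 1))"
  defines "K \<equiv> 2 * (real n + 1) * (real n + 2) * (1 - cos (real l * pi / (real n + 1)))
                 / (sin (real l * pi / (real n + 1)))^2"
  shows "(odd l \<longrightarrow> Phi n \<alpha> = 16 * (cos (real l * pi / (2 * (real n + 1))))^2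
                       \<and> Phi n \<alpha> > 0)
       \<and> (even l \<longrightarrow> Phi n \<alpha> = 0
                       \<and> deriv (Phi n) \<alpha> = K * (cos (real l * pi / (real n + 1)) + real n / (real n + 2))
                       \<and> deriv (Phi n) \<alpha> \<noteq> 0
                       \<and> K > 0)"
proof -
  define \<theta> where "\<theta> = real l * pi / (real n + 1)"
  have root: "(real n + 1) * \<theta> = real l * pi" by (simp add: \<theta>_def)
  have "real l * pi < (real n + 1) * pi" using assms(3) by simp
  then have "0 < \<theta>" and "\<theta> < pi" using assms(2) by (simp_all add: \<theta>_def divide_less_eq)
  then have "sin \<theta> > 0" and "cos \<theta> < 1" and "cos \<theta> > -1"
    using sin_gt_zero cos_monotone_0_pi[of 0 \<theta>] cos_monotone_0_pi[of \<theta> pi] by simp_all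
  have \<alpha>: "\<alpha> = 2 * cos \<theta>" by (simp add: \<alpha>_def \<theta>_def)
  have Phi_\<alpha>: "Phi n \<alpha> = 4 * (cos \<theta> + 1) * (1 - (-1) ^ l)"
    unfolding \<alpha> using \<open>sin \<theta> > 0\<close> assms(1) by (intro Phi_at_root[OF _ root]) simp_all
  have half: "real l * pi / (2 * (real n + 1)) = \<theta> / 2" by (simp add: \<theta>_def)
  have half_angle: "cos \<theta> + 1 = 2 * (cos (real l * pi / (2 * (real n + 1))))^2"
    unfolding half using cos_double_cos[of "\<theta> / 2"] by simp
  have K: "K = 2 * (real n + 1) * (real n + 2) * (1 - cos \<theta>) / (sin \<theta>)^2"
    by (simp add: K_def \<theta>_def)
  have "K > 0" unfolding K using \<open>sin \<theta> > 0\<close> \<open>cos \<theta> < 1\<close> by simp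
  moreover have "deriv (Phi n) \<alpha> = K * (cos \<theta> + real n / (real n + 2))" if "even l"
    unfolding \<alpha> K using \<open>sin \<theta> > 0\<close> assms(1) that
    by (intro deriv_Phi_at_even_root[OF _ root]) simp_all
  moreover have "cos \<theta> + real n / (real n + 2) \<noteq> 0" using cos_root_ne_neg_ratio[OF root assms(1)] .
  ultimately show ?thesis using Phi_\<alpha> half_angle \<open>cos \<theta> > -1\<close> unfolding \<theta>_def by auto
qed

end
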